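(* Let $(Q,\cdot,e)$ be a double Ward quasigroup and define $x\diamond y=(e\cdot x)\cdot(e\cdot y)$ (so $(Q,\diamond)$ is a group with identity $e$). Then $(Q,\cdot,\diamond)$ is a lateral double magma, i.e. $(x\cdot y)\diamond(z\cdot w)=(y\diamond x)\cdot(w\diamond z)$ for all $x,y,z,w\in Q$. Moreover, if $(Q,\circ)$ is a group with identity $e$ such that $(x\cdot y)\circ(z\cdot w)=(y\circ x)\cdot(w\circ z)$ for all $x,y,z,w\in Q$, then $x\circ y=x\diamond y$ for all $x,y\in Q$.
   Context: A quasigroup is a magma in which $ax=b$ and $ya=b$ have unique solutions for all $a,b$. A double Ward quasigroup $(Q,\cdot,e)$ is a quasigroup with an element $e$ such that $(ee\cdot xz)(ey\cdot z)=xy$ for all $x,y,z$. *)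

theory Defs
  imports Main
begin

definition quasigroup :: "('a \<Rightarrow> 'a \<Rightarrow> 'a) \<Rightarrow> bool" where
  "quasigroup m \<longleftrightarrow> (\<forall>a b. (\<exists>!x. m a x = b) \<and> (\<exists>!y. m y a = b))"

definition double_ward_quasigroup :: "('a \<Rightarrow> 'a \<Rightarrow> 'a) \<Rightarrow> 'a \<Rightarrow> bool" where
  "double_ward_quasigroup m e \<longleftrightarrow> quasigroup m \<and>
     (\<forall>x y z. m (m (m e e) (m x z)) (m (m e y) z) = m x y)"

definition group_with_identity :: "('a \<Rightarrow> 'a \<Rightarrow> 'a) \<Rightarrow> 'a \<Rightarrow> bool" where
  "group_with_identity g e \<longleftrightarrow>
     (\<forall>x y z. g (g x y) z = g x (g y z)) \<and>
     (\<forall>x. g e x = x \<and> g x e = x) \<and>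
     (\<forall>x. \<exists>y. g x y = e \<and> g y x = e)"

definition diamond :: "('a \<Rightarrow> 'a \<Rightarrow> 'a) \<Rightarrow> 'a \<Rightarrow> 'a \<Rightarrow> 'a \<Rightarrow> 'a" where
  "diamond m e x y = m (m e x) (m e y)"

definition lateral_double_magma :: "('a \<Rightarrow> 'a \<Rightarrow> 'a) \<Rightarrow> ('a \<Rightarrow> 'a \<Rightarrow> 'a) \<Rightarrow> bool" where
  "lateral_double_magma m g \<longleftrightarrow>
     (\<forall>x y z w. g (m x y) (m z w) = m (g y x) (g w z))"

end

theory Submission
  imports Defs
begin

text \<open>In a double Ward quasigroup, \<open>e\<close> is idempotent, left multiplication by \<open>e\<close> is an
involution and an anti-automorphism: \<open>e \<cdot> xy = (e \<cdot> y)(e \<cdot> x)\<close>. Hence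
\<open>x \<diamond> y = e \<cdot> yx\<close>, which makes the lateral law for \<open>\<diamond>\<close> immediate. Conversely, in the lateral
law for \<open>\<circ>\<close> take the first pair to be \<open>e, e\<close>: since \<open>e \<circ> u = u\<close> and \<open>ee = e\<close>, this gives
\<open>yx = e \<cdot> (x \<circ> y)\<close>, so \<open>x \<circ> y = e \<cdot> yx = x \<diamond> y\<close>.\<close>

lemma quasigroup_cancel_left: "quasigroup m \<Longrightarrow> m a x = m a y \<longleftrightarrow> x = y"
  unfolding quasigroup_def by blast

lemma quasigroup_cancel_right: "quasigroup m \<Longrightarrow> m x a = m y a \<longleftrightarrow> x = y"
  unfolding quasigroup_def by blast

lemma quasigroup_solve_left: "quasigroup m \<Longrightarrow> \<exists>x. m a x = b"
  unfolding quasigroup_def by blast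

lemma quasigroup_solve_right: "quasigroup m \<Longrightarrow> \<exists>y. m y a = b"
  unfolding quasigroup_def by blast

lemma lateral_double_magma_left_unit_eq:
  assumes lat: "lateral_double_magma m g"
    and left_unit: "\<And>u. g e u = u"
    and idem: "m e e = e"
    and invol: "\<And>u. m e (m e u) = u"
  shows "g x y = m e (m y x)"
proof -
  have "g (m e e) (m y x) = m (g e e) (g x y)"
    using lat unfolding lateral_double_magma_def by blast
  then have "m y x = m e (g x y)"
    by (simp add: idem left_unit)
  then show ?thesis
    by (simp add: invol)
qed

context
  fixes m :: "'a \<Rightarrow> 'a \<Rightarrow> 'a" and e :: 'a
  assumes double_ward: "double_ward_quasigroup m e"
begin

private lemma quasigroup: "quasigroup m"
  using double_ward unfolding double_ward_quasigroup_def by blast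

private lemma ward: "m (m (m e e) (m x y)) (m (m e z) y) = m x z"
  using double_ward unfolding double_ward_quasigroup_def by blast

lemma double_ward_e_idem: "m e e = e"
proof -
  \<comment> \<open>\<open>c\<close> and \<open>d\<close> make the inner product \<open>x y\<close> of the Ward identity collapse to \<open>e\<close>.\<close>
  obtain c where c: "m (m e e) c = e"
    using quasigroup_solve_left[OF quasigroup] by blast
  obtain d where d: "m d e = e"
    using quasigroup_solve_right[OF quasigroup] by blast
  have "m (m (m e e) e) e = m (m e e) e"
    using ward[of "m e e" c e] by (simp only: c)
  then have fe: "m (m e e) e = m e e"
    by (simp only: quasigroup_cancel_right[OF quasigroup])
  have ff: "m (m e e) (m e e) = e"
    using ward[of d e e] by (simp only: d fe)
  have "m e (m e e) = m e e"
    using ward[of "m e e" e e] by (simp only: fe ff)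
  then show ?thesis
    by (simp only: quasigroup_cancel_left[OF quasigroup])
qed

lemma double_ward_e_mult_right_e: "m e (m x e) = x"
  using ward[of x e e] by (simp only: double_ward_e_idem quasigroup_cancel_right[OF quasigroup])

lemma double_ward_mult_self_right_e: "m x (m x e) = e"
proof -
  obtain z where z: "m e z = m x e"
    using quasigroup_solve_left[OF quasigroup] by blast
  show ?thesis
    using ward[of e z e] by (simp only: z double_ward_e_idem double_ward_e_mult_right_e)
qed

lemma double_ward_right_e_eq_left_e: "m x e = m e x"
proof -
  have "m e x = m x e"
    using ward[of x "m x e" e]
    by (simp only: double_ward_e_idem double_ward_mult_self_right_e double_ward_e_mult_right_e)
  then show ?thesis ..
qed

lemma double_ward_e_involution: "m e (m e x) = x"
  using double_ward_e_mult_right_e[of x] by (simp only: double_ward_right_e_eq_left_e[of x])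

lemma double_ward_e_antihom: "m e (m x y) = m (m e y) (m e x)"
proof -
  have "m e (m (m e y) (m x e)) = m x y"
    using ward[of x "m x e" y] by (simp only: double_ward_e_idem double_ward_mult_self_right_e)
  then have "m e (m (m e y) (m e x)) = m x y"
    by (simp only: double_ward_right_e_eq_left_e[of x])
  then show ?thesis
    by (metis double_ward_e_involution)
qed

lemma diamond_double_ward: "diamond m e x y = m e (m y x)"
  by (simp add: diamond_def double_ward_e_antihom)

lemma lateral_double_magma_diamond: "lateral_double_magma m (diamond m e)"
  unfolding lateral_double_magma_def by (simp add: diamond_double_ward double_ward_e_antihom)

end

theorem theorem4p6:
  fixes m :: "'a \<Rightarrow> 'a \<Rightarrow> 'a" and e :: 'a
  assumes "double_ward_quasigroup m e"
  shows "lateral_double_magma m (diamond m e) \<and>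
         (\<forall>g. group_with_identity g e \<and> lateral_double_magma m g \<longrightarrow>
              (\<forall>x y. g x y = diamond m e x y))"
proof (intro conjI allI impI)
  show "lateral_double_magma m (diamond m e)"
    using assms by (rule lateral_double_magma_diamond)
next
  fix g x y
  assume "group_with_identity g e \<and> lateral_double_magma m g"
  then have lat: "lateral_double_magma m g" and left_unit: "\<And>u. g e u = u"
    unfolding group_with_identity_def by blast+
  have "g x y = m e (m y x)"
    using lateral_double_magma_left_unit_eq[OF lat left_unit double_ward_e_idem[OF assms]
        double_ward_e_involution[OF assms]] .
  then show "g x y = diamond m e x y"
    by (simp add: diamond_double_ward[OF assms])
qed

end
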